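(* Let $n\ge1$ and let $P=a_1+a_2+\dots+a_k$ be a partition of $n$ (an ordered sum of positive integers) with every part $a_i\le 3$. Let $JSMP_n$ be the set of elements of the Jones' monoid $J_n$ for which $P$ is a partition. Then $JSMP_n$ is an idempotent monoid under the operation of $J_n$, i.e. it is a submonoid of $J_n$ in which every element $x$ satisfies $x\cdot x=x$.
   Context: A Kauffman diagram on $2n$ points is a rectangle with $n$ marked points on its upper side and $n$ on its lower side, the $2n$ points being paired by $n$ pairwise non-intersecting strings inside the rectangle, considered up to planar isotopy. The product $AB$ of two diagrams is formed by stacking $A$ on top of $B$ (identifying the lower side of $A$ with the upper side of $B$). The Jones' monoid $J_n$ is the set of Kauffman diagrams on $2n$ points with this concatenation product, where any closed loops arising in a product are simply deleted; its identity is the diagram with $n$ vertical strings. For $j\in J_n$, $P=a_1+\dots+a_k$ is said to be a partition of $j$ if $j$ can be divided by $k-1$ vertical line segments (not crossing any string) into consecutive parts, the $i$-th part containing $a_i$ strings (i.e. $a_i$ upper and $a_i$ lower marked points). *)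

theory Defs
  imports Main
begin

text \<open>Marked points of a Kauffman diagram on 2n points: (Top, i) is the i-th upper
point and (Bot, i) the i-th lower point, counted from the left, 0 \<le> i < n.
A diagram is represented by its pairing of marked points (a symmetric relation);
up to planar isotopy a Kauffman diagram is exactly a non-crossing perfect matching.\<close>

datatype side = Top | Bot

type_synonym point = "side \<times> nat"
type_synonym diagram = "(point \<times> point) set"

definition pts :: "nat \<Rightarrow> point set" where
  "pts n = {(s, i). i < n}"

text \<open>Position of a marked point when walking around the boundary of the rectangle:
upper side left to right, then lower side right to left.\<close>
definition bpos :: "nat \<Rightarrow> point \<Rightarrow> nat" where
  "bpos n p = (case p of (Top, i) \<Rightarrow> i | (Bot, i) \<Rightarrow> 2 * n - 1 - i)"

definition noncrossing :: "nat \<Rightarrow> diagram \<Rightarrow> bool" where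
  "noncrossing n d \<longleftrightarrow>
     (\<forall>a b c e. (a, b) \<in> d \<longrightarrow> (c, e) \<in> d \<longrightarrow>
        \<not> (bpos n a < bpos n c \<and> bpos n c < bpos n b \<and> bpos n b < bpos n e))"

definition jones :: "nat \<Rightarrow> diagram set" where
  "jones n = {d. d \<subseteq> pts n \<times> pts n \<and> sym d \<and> irrefl d
                \<and> (\<forall>p\<in>pts n. \<exists>!q. (p, q) \<in> d) \<and> noncrossing n d}"

definition jid :: "nat \<Rightarrow> diagram" where
  "jid n = {((Top, i), (Bot, i)) | i. i < n} \<union> {((Bot, i), (Top, i)) | i. i < n}"

text \<open>Stacking A on top of B: vertices are (level, index) with level 0 = upper side of A,
level 1 = identified lower side of A / upper side of B, level 2 = lower side of B.\<close>
definition embA :: "point \<Rightarrow> nat \<times> nat" where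
  "embA p = (case p of (Top, i) \<Rightarrow> (0, i) | (Bot, i) \<Rightarrow> (1, i))"

definition embB :: "point \<Rightarrow> nat \<times> nat" where
  "embB p = (case p of (Top, i) \<Rightarrow> (1, i) | (Bot, i) \<Rightarrow> (2, i))"

definition embOut :: "point \<Rightarrow> nat \<times> nat" where
  "embOut p = (case p of (Top, i) \<Rightarrow> (0, i) | (Bot, i) \<Rightarrow> (2, i))"

definition stack_edges :: "diagram \<Rightarrow> diagram \<Rightarrow> ((nat \<times> nat) \<times> (nat \<times> nat)) set" where
  "stack_edges A B = (\<lambda>(p, q). (embA p, embA q)) ` A \<union> (\<lambda>(p, q). (embB p, embB q)) ` B"

text \<open>Product AB: two outer points are paired iff they are joined by a string in the
stacked picture; closed loops (entirely in the middle level) are discarded.\<close>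
definition jmult :: "diagram \<Rightarrow> diagram \<Rightarrow> diagram" where
  "jmult A B = {(p, q). p \<noteq> q \<and> (embOut p, embOut q) \<in> (stack_edges A B)\<^sup>*}"

definition cuts :: "nat list \<Rightarrow> nat set" where
  "cuts P = {sum_list (take m P) | m. 0 < m \<and> m < length P}"

text \<open>P is a partition of d: no string crosses any of the vertical cut lines, i.e. the two
endpoints of every string lie in the same part.\<close>
definition has_partition :: "nat list \<Rightarrow> diagram \<Rightarrow> bool" where
  "has_partition P d \<longleftrightarrow>
     (\<forall>p q c. (p, q) \<in> d \<longrightarrow> c \<in> cuts P \<longrightarrow> (snd p < c \<longleftrightarrow> snd q < c))"

definition JSMP :: "nat \<Rightarrow> nat list \<Rightarrow> diagram set" where
  "JSMP n P = {d \<in> jones n. has_partition P d}"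

end

theory Submission
  imports Defs
begin

text \<open>A diagram with partition \<open>P\<close> is the juxtaposition of diagrams of \<open>J\<^sub>a\<close>, one for
  each part \<open>a\<close>, and stacking two such diagrams works blockwise: a walk in the stacked picture that
  starts in a block never leaves it. So the product again has partition \<open>P\<close>, its blocks being the
  products of the blocks, and everything reduces to \<open>J\<^sub>a\<close> being closed and idempotent for
  \<open>a \<le> 3\<close>. That is a finite check: the noncrossing perfect matchings on \<open>2a\<close> points are
  enumerated (1, 2 and 5 of them for \<open>a = 1, 2, 3\<close>) and all their products are computed.\<close>

lemma emb_simps [simp]:
  "embOut (Top, i) = (0, i)" "embOut (Bot, i) = (2, i)"
  "embA (Top, i) = (0, i)" "embA (Bot, i) = (1, i)"
  "embB (Top, i) = (1, i)" "embB (Bot, i) = (2, i)"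
  by (simp_all add: embOut_def embA_def embB_def)

lemma snd_emb [simp]: "snd (embOut p) = snd p" "snd (embA p) = snd p" "snd (embB p) = snd p"
  by (cases p; cases "fst p"; simp)+

lemma inj_embOut: "inj embOut"
proof (rule injI)
  fix p q :: point
  assume "embOut p = embOut q"
  then show "p = q" by (cases p; cases q; cases "fst p"; cases "fst q") auto
qed

lemma bpos_simps [simp]: "bpos n (Top, i) = i" "bpos n (Bot, i) = 2 * n - 1 - i"
  by (simp_all add: bpos_def)

lemma mem_pts [simp]: "p \<in> pts n \<longleftrightarrow> snd p < n"
  by (cases p) (simp add: pts_def)

lemma stack_edges_subset:
  assumes "A \<subseteq> pts n \<times> pts n" "B \<subseteq> pts n \<times> pts n" "(u, v) \<in> stack_edges A B"
  shows "snd u < n \<and> snd v < n"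
  using assms by (auto simp: stack_edges_def)

lemma jmult_subset_pts:
  assumes "A \<subseteq> pts n \<times> pts n" "B \<subseteq> pts n \<times> pts n"
  shows "jmult A B \<subseteq> pts n \<times> pts n"
proof (rule subrelI)
  fix p q assume pq: "(p, q) \<in> jmult A B"
  then have "embOut p \<noteq> embOut q"
    using inj_embOut by (auto simp: jmult_def dest: injD)
  moreover have "(embOut p, embOut q) \<in> (stack_edges A B)\<^sup>*"
    using pq by (simp add: jmult_def)
  ultimately have "(embOut p, embOut q) \<in> (stack_edges A B)\<^sup>+"
    by (simp add: rtrancl_eq_or_trancl)
  then obtain u v where "(embOut p, u) \<in> stack_edges A B" "(v, embOut q) \<in> stack_edges A B"
    by (meson tranclD tranclD2)
  then show "(p, q) \<in> pts n \<times> pts n"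
    using stack_edges_subset[OF assms] by fastforce
qed

subsection \<open>Perfect matchings\<close>

definition perfect_matching :: "'a set \<Rightarrow> ('a \<times> 'a) set \<Rightarrow> bool" where
  "perfect_matching S d \<longleftrightarrow> d \<subseteq> S \<times> S \<and> sym d \<and> irrefl d \<and> (\<forall>p\<in>S. \<exists>!q. (p, q) \<in> d)"

lemma jones_iff: "d \<in> jones n \<longleftrightarrow> perfect_matching (pts n) d \<and> noncrossing n d"
  by (simp add: jones_def perfect_matching_def)

lemma perfect_matching_insert_pair:
  assumes "a \<noteq> b" "a \<notin> S" "b \<notin> S" "d \<subseteq> S \<times> S"
  shows "perfect_matching (insert a (insert b S)) (insert (a, b) (insert (b, a) d))
    \<longleftrightarrow> perfect_matching S d"
proof -
  let ?d = "insert (a, b) (insert (b, a) d)"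
  have partners: "(p, q) \<in> ?d \<longleftrightarrow> (p, q) \<in> d" if "p \<in> S" for p q
    using that assms by auto
  have "(a, q) \<in> ?d \<longleftrightarrow> q = b" "(b, q) \<in> ?d \<longleftrightarrow> q = a" for q
    using assms by auto
  then have "(\<forall>p\<in>insert a (insert b S). \<exists>!q. (p, q) \<in> ?d) \<longleftrightarrow> (\<forall>p\<in>S. \<exists>!q. (p, q) \<in> d)"
    using partners by simp
  moreover have "sym ?d \<longleftrightarrow> sym d" "irrefl ?d \<longleftrightarrow> irrefl d"
    using assms by (auto simp: sym_def irrefl_def)
  moreover have "?d \<subseteq> insert a (insert b S) \<times> insert a (insert b S)"
    using assms(4) by blast
  ultimately show ?thesis
    using assms(4) by (simp only: perfect_matching_def simp_thms)
qed

function matchings :: "'a list \<Rightarrow> ('a \<times> 'a) list list" where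
  "matchings [] = [[]]"
| "matchings (x # xs) = concat (map (\<lambda>y. map ((#) (x, y)) (matchings (remove1 y xs))) xs)"
  by pat_completeness auto
termination
  by (relation "measure length") (auto simp: length_remove1 dest: length_pos_if_in_set)

definition symmetrize :: "('a \<times> 'a) list \<Rightarrow> ('a \<times> 'a) list" where
  "symmetrize m = m @ map prod.swap m"

lemma set_symmetrize_Cons:
  "set (symmetrize ((a, b) # m)) = insert (a, b) (insert (b, a) (set (symmetrize m)))"
  by (auto simp: symmetrize_def)

lemma perfect_matching_matchings:
  assumes "distinct xs" "m \<in> set (matchings xs)"
  shows "perfect_matching (set xs) (set (symmetrize m))"
  using assms
proof (induction xs arbitrary: m rule: matchings.induct)
  case 1
  then show ?case by (simp add: perfect_matching_def symmetrize_def sym_def irrefl_def)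
next
  case (2 x xs)
  then obtain y m' where y: "y \<in> set xs" and m': "m' \<in> set (matchings (remove1 y xs))"
    and m: "m = (x, y) # m'" by auto
  let ?S = "set (remove1 y xs)"
  have S: "?S = set xs - {y}" and "x \<notin> set xs"
    using "2.prems"(1) by simp_all
  have IH: "perfect_matching ?S (set (symmetrize m'))"
    using "2.IH"[OF y _ m'] "2.prems"(1) by simp
  have "x \<noteq> y" "x \<notin> ?S" "y \<notin> ?S"
    using S y \<open>x \<notin> set xs\<close> by auto
  moreover have "set (symmetrize m') \<subseteq> ?S \<times> ?S"
    using IH by (simp add: perfect_matching_def)
  ultimately have "perfect_matching (insert x (insert y ?S)) (set (symmetrize m))"
    unfolding m set_symmetrize_Cons using IH by (simp add: perfect_matching_insert_pair)
  moreover have "insert x (insert y ?S) = set (x # xs)"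
    using S y by auto
  ultimately show ?case
    by simp
qed

lemma perfect_matching_remove_pair:
  assumes pm: "perfect_matching (insert x S) d" and "x \<notin> S" and xy: "(x, y) \<in> d"
  defines "S' \<equiv> S - {y}"
  shows "y \<in> S" and "d = insert (x, y) (insert (y, x) (d \<inter> S' \<times> S'))"
    and "perfect_matching S' (d \<inter> S' \<times> S')"
proof -
  have sub: "d \<subseteq> insert x S \<times> insert x S" and "sym d" "irrefl d"
    and ex1: "\<forall>p\<in>insert x S. \<exists>!q. (p, q) \<in> d"
    using pm by (auto simp: perfect_matching_def)
  have unique: "q = q'" if "(p, q) \<in> d" "(p, q') \<in> d" for p q q'
  proof -
    have "\<exists>!q. (p, q) \<in> d"
      using ex1 that(1) sub by blast
    then show ?thesis using that by blast
  qed
  have sym: "(q, p) \<in> d" if "(p, q) \<in> d" for p q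
    using that \<open>sym d\<close> by (simp add: symD)
  have "y \<noteq> x"
    using xy \<open>irrefl d\<close> by (auto simp: irrefl_def)
  then show y: "y \<in> S"
    using xy sub by auto
  let ?d' = "d \<inter> S' \<times> S'"
  show d_eq: "d = insert (x, y) (insert (y, x) ?d')"
  proof
    show "d \<subseteq> insert (x, y) (insert (y, x) ?d')"
    proof (rule subrelI)
      fix p q assume pq: "(p, q) \<in> d"
      have partners: "p = x \<Longrightarrow> q = y" "p = y \<Longrightarrow> q = x" "q = x \<Longrightarrow> p = y" "q = y \<Longrightarrow> p = x"
        using unique pq sym[OF pq] xy sym[OF xy] by blast+
      show "(p, q) \<in> insert (x, y) (insert (y, x) ?d')"
      proof (cases "p \<in> {x, y} \<or> q \<in> {x, y}")
        case True
        then show ?thesis using partners by blast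
      next
        case False
        then show ?thesis using pq sub by (auto simp: S'_def)
      qed
    qed
    show "insert (x, y) (insert (y, x) ?d') \<subseteq> d"
      using xy sym[OF xy] by blast
  qed
  have "perfect_matching (insert x (insert y S')) (insert (x, y) (insert (y, x) ?d'))"
    using pm y d_eq by (simp add: S'_def insert_absorb)
  moreover have "x \<noteq> y" "x \<notin> S'" "y \<notin> S'" "?d' \<subseteq> S' \<times> S'"
    using y \<open>x \<notin> S\<close> by (auto simp: S'_def)
  ultimately show "perfect_matching S' ?d'"
    using perfect_matching_insert_pair[of x y S' ?d'] by blast
qed

lemma matchings_complete:
  assumes "distinct xs" "perfect_matching (set xs) d"
  shows "\<exists>m\<in>set (matchings xs). d = set (symmetrize m)"
  using assms
proof (induction xs arbitrary: d rule: matchings.induct)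
  case 1
  then show ?case by (auto simp: perfect_matching_def symmetrize_def)
next
  case (2 x xs)
  obtain y where xy: "(x, y) \<in> d"
    using "2.prems"(2) by (auto simp: perfect_matching_def)
  have pm: "perfect_matching (insert x (set xs)) d" and "x \<notin> set xs"
    and S: "set (remove1 y xs) = set xs - {y}"
    using "2.prems" by simp_all
  note split = perfect_matching_remove_pair[OF pm \<open>x \<notin> set xs\<close> xy, folded S]
  obtain m' where m': "m' \<in> set (matchings (remove1 y xs))"
    "d \<inter> set (remove1 y xs) \<times> set (remove1 y xs) = set (symmetrize m')"
    using "2.IH"[OF split(1) _ split(3)] "2.prems"(1) by auto
  have "(x, y) # m' \<in> set (matchings (x # xs))"
    using split(1) m'(1) by auto
  moreover have "d = set (symmetrize ((x, y) # m'))"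
    using split(2) m'(2) by (simp add: set_symmetrize_Cons)
  ultimately show ?case by blast
qed

subsection \<open>Computing in small Jones monoids\<close>

definition pt_list :: "nat \<Rightarrow> point list" where
  "pt_list n = map (Pair Top) [0..<n] @ map (Pair Bot) (rev [0..<n])"

lemma set_pt_list: "set (pt_list n) = pts n"
proof (rule set_eqI)
  fix p :: point
  show "p \<in> set (pt_list n) \<longleftrightarrow> p \<in> pts n"
    by (cases p; cases "fst p") (auto simp: pt_list_def)
qed

lemma distinct_pt_list: "distinct (pt_list n)"
  by (auto simp: pt_list_def distinct_map inj_on_def)

text \<open>\<open>pt_list\<close> lists the points in boundary order, so \<open>jmult_list\<close> below
  lists the strings of a product sorted by the boundary position of their first end. Sorting the
  enumerated diagrams the same way makes equality of diagrams equality of lists.\<close>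

definition canon :: "nat \<Rightarrow> (point \<times> point) list \<Rightarrow> (point \<times> point) list" where
  "canon n d = sort_key (\<lambda>(p, q). bpos n p) d"

lemma noncrossing_set:
  "noncrossing n (set xs) \<longleftrightarrow>
     (\<forall>(a, b)\<in>set xs. \<forall>(c, e)\<in>set xs. \<not> (bpos n a < bpos n c \<and> bpos n c < bpos n b \<and> bpos n b < bpos n e))"
  by (auto simp: noncrossing_def)

definition jones_list :: "nat \<Rightarrow> (point \<times> point) list list" where
  "jones_list n = map (canon n)
     (filter (\<lambda>m. noncrossing n (set m)) (map symmetrize (matchings (pt_list n))))"

lemma jones_eq_jones_list: "jones n = set ` set (jones_list n)"
proof
  show "jones n \<subseteq> set ` set (jones_list n)"
  proof
    fix d assume d: "d \<in> jones n"
    then obtain m where m: "m \<in> set (matchings (pt_list n))" "d = set (symmetrize m)"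
      using matchings_complete[OF distinct_pt_list] by (auto simp: jones_iff set_pt_list)
    moreover have "canon n (symmetrize m) \<in> set (jones_list n)"
      using d m by (auto simp: jones_list_def jones_iff)
    moreover have "set (canon n (symmetrize m)) = d"
      using m(2) by (simp add: canon_def)
    ultimately show "d \<in> set ` set (jones_list n)"
      by (metis image_eqI)
  qed
  show "set ` set (jones_list n) \<subseteq> jones n"
  proof clarify
    fix d assume "d \<in> set (jones_list n)"
    then obtain m where m: "m \<in> set (matchings (pt_list n))" "noncrossing n (set (symmetrize m))"
      and d: "d = canon n (symmetrize m)"
      by (auto simp: jones_list_def)
    have "perfect_matching (pts n) (set (symmetrize m))"
      using perfect_matching_matchings[OF distinct_pt_list m(1)] by (simp add: set_pt_list)
    then show "set d \<in> jones n"
      using m(2) by (simp add: jones_iff d canon_def)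
  qed
qed

fun reach :: "nat \<Rightarrow> ('v \<times> 'v) list \<Rightarrow> 'v list \<Rightarrow> 'v list" where
  "reach 0 R xs = xs"
| "reach (Suc k) R xs = reach k R (remdups (xs @ [v. (u, v) \<leftarrow> R, u \<in> set xs]))"

declare reach.simps(2) [simp del]

lemma set_reach_bounds:
  "set xs \<subseteq> set (reach k R xs) \<and> set (reach k R xs) \<subseteq> (set R)\<^sup>* `` set xs"
proof (induction k arbitrary: xs)
  case 0
  then show ?case by auto
next
  case (Suc k)
  let ?ys = "remdups (xs @ [v. (u, v) \<leftarrow> R, u \<in> set xs])"
  have "set ?ys = set xs \<union> set R `` set xs"
    by force
  then have "set ?ys \<subseteq> (set R)\<^sup>* `` set xs"
    by (auto intro: r_into_rtrancl)
  then have "(set R)\<^sup>* `` set ?ys \<subseteq> (set R)\<^sup>* `` ((set R)\<^sup>* `` set xs)"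
    by (rule Image_mono[OF order_refl])
  then have "(set R)\<^sup>* `` set ?ys \<subseteq> (set R)\<^sup>* `` set xs"
    by (simp flip: relcomp_Image)
  then show ?case
    using Suc.IH[of ?ys] by (auto simp: reach.simps(2))
qed

lemma reach_numeral:
  "reach (numeral k) R xs = reach (pred_numeral k) R (remdups (xs @ [v. (u, v) \<leftarrow> R, u \<in> set xs]))"
  by (simp add: numeral_eq_Suc reach.simps(2))

lemma rtrancl_Image_eq_closed:
  assumes "X \<subseteq> C" "C \<subseteq> r\<^sup>* `` X" "r `` C \<subseteq> C"
  shows "r\<^sup>* `` X = C"
proof -
  have "r\<^sup>* `` X \<subseteq> r\<^sup>* `` C"
    using assms(1) by (rule Image_mono[OF order_refl])
  also have "\<dots> = C"
    by (rule Image_closed_trancl[OF assms(3)])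
  finally show ?thesis
    using assms(2) by blast
qed

definition closed_under :: "('v \<times> 'v) list \<Rightarrow> 'v list \<Rightarrow> bool" where
  "closed_under R C \<longleftrightarrow> (\<forall>(u, v)\<in>set R. u \<in> set C \<longrightarrow> v \<in> set C)"

definition stack_list :: "(point \<times> point) list \<Rightarrow> (point \<times> point) list \<Rightarrow> ((nat \<times> nat) \<times> (nat \<times> nat)) list" where
  "stack_list la lb = map (\<lambda>(p, q). (embA p, embA q)) la @ map (\<lambda>(p, q). (embB p, embB q)) lb"

definition string_ends :: "nat \<Rightarrow> (nat \<times> nat) list \<Rightarrow> point \<Rightarrow> (point \<times> point) list" where
  "string_ends n C p = [(p, q). q \<leftarrow> pt_list n, q \<noteq> p, embOut q \<in> set C]"

definition jmult_list :: "nat \<Rightarrow> (point \<times> point) list \<Rightarrow> (point \<times> point) list \<Rightarrow> (point \<times> point) list" where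
  "jmult_list n la lb =
     concat (map (\<lambda>p. string_ends n (reach (Suc n) (stack_list la lb) [embOut p]) p) (pt_list n))"

text \<open>The number \<open>n + 1\<close> of rounds in \<open>jmult_list\<close> is only a guess;
  \<open>reach_closed\<close> certifies that the sets reached are closed under the edge relation.\<close>

definition reach_closed :: "nat \<Rightarrow> (point \<times> point) list \<Rightarrow> (point \<times> point) list \<Rightarrow> bool" where
  "reach_closed n la lb \<longleftrightarrow>
     (\<forall>p\<in>set (pt_list n). closed_under (stack_list la lb) (reach (Suc n) (stack_list la lb) [embOut p]))"

lemma jmult_eq_jmult_list:
  assumes A: "set la \<subseteq> pts n \<times> pts n" and B: "set lb \<subseteq> pts n \<times> pts n"
    and closed: "reach_closed n la lb"
  shows "jmult (set la) (set lb) = set (jmult_list n la lb)"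
proof -
  let ?R = "stack_list la lb"
  let ?C = "\<lambda>p. reach (Suc n) ?R [embOut p]"
  have R: "set ?R = stack_edges (set la) (set lb)"
    by (auto simp: stack_list_def stack_edges_def)
  have reachable: "(set ?R)\<^sup>* `` {embOut p} = set (?C p)" if "p \<in> pts n" for p
  proof (rule rtrancl_Image_eq_closed)
    show "{embOut p} \<subseteq> set (?C p)" "set (?C p) \<subseteq> (set ?R)\<^sup>* `` {embOut p}"
      using set_reach_bounds[of "[embOut p]" "Suc n" ?R] by simp_all
    show "set ?R `` set (?C p) \<subseteq> set (?C p)"
      using closed that unfolding reach_closed_def closed_under_def set_pt_list by blast
  qed
  show ?thesis
  proof (rule set_eqI, clarify)
    fix p q
    have "(p, q) \<in> jmult (set la) (set lb) \<longleftrightarrow>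
        p \<in> pts n \<and> q \<in> pts n \<and> (p, q) \<in> jmult (set la) (set lb)"
      using jmult_subset_pts[OF A B] by blast
    also have "\<dots> \<longleftrightarrow> (p, q) \<in> set (jmult_list n la lb)"
      using reachable[of p, symmetric, unfolded R]
      by (auto simp: jmult_def jmult_list_def string_ends_def set_pt_list)
    finally show "(p, q) \<in> jmult (set la) (set lb) \<longleftrightarrow> (p, q) \<in> set (jmult_list n la lb)" .
  qed
qed

definition jones_band_check :: "nat \<Rightarrow> bool" where
  "jones_band_check n \<longleftrightarrow>
     (\<forall>x\<in>set (jones_list n). \<forall>y\<in>set (jones_list n).
        reach_closed n x y \<and> jmult_list n x y \<in> set (jones_list n)) \<and>
     (\<forall>x\<in>set (jones_list n). jmult_list n x x = x)"

lemma jones_band_if_check: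
  assumes "jones_band_check n" "x \<in> jones n" "y \<in> jones n"
  shows "jmult x y \<in> jones n \<and> jmult x x = x"
proof -
  obtain lx ly where l: "lx \<in> set (jones_list n)" "ly \<in> set (jones_list n)"
    and xy: "x = set lx" "y = set ly"
    using assms(2,3) by (auto simp: jones_eq_jones_list)
  have sub: "set l \<subseteq> pts n \<times> pts n" if "l \<in> set (jones_list n)" for l
  proof -
    have "set l \<in> jones n"
      using that by (simp add: jones_eq_jones_list)
    then show ?thesis by (simp add: jones_def)
  qed
  have check: "reach_closed n lx ly" "jmult_list n lx ly \<in> set (jones_list n)"
    "reach_closed n lx lx" "jmult_list n lx lx = lx"
    using assms(1) l by (simp_all add: jones_band_check_def)
  have "jmult x y = set (jmult_list n lx ly)" "jmult x x = set (jmult_list n lx lx)"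
    unfolding xy using jmult_eq_jmult_list sub l check by blast+
  then show ?thesis
    using check by (simp add: xy jones_eq_jones_list)
qed

text \<open>The quantifiers over \<open>jones_list\<close> are expanded before the products are unfolded:
  simplifying \<open>jmult_list\<close> under the binders would run the reachability computation
  symbolically. For the same reason membership in \<open>jones_list\<close> is only decided at the end,
  once each product is a concrete list.\<close>

lemma jones_band_check_upto_3: "list_all jones_band_check [0, 1, 2, 3]"
  apply (simp add: jones_band_check_def jones_list_def canon_def pt_list_def noncrossing_set
      symmetrize_def upt_conv_Cons del: insert_iff)
  apply (simp add: reach_closed_def jmult_list_def pt_list_def upt_conv_Cons del: insert_iff)
  apply (simp add: closed_under_def string_ends_def stack_list_def reach_numeral reach.simps(2)
      pt_list_def upt_conv_Cons)
  done

lemma jones_band_upto_3: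
  assumes "n \<le> 3" "x \<in> jones n" "y \<in> jones n"
  shows "jmult x y \<in> jones n \<and> jmult x x = x"
proof -
  have "n \<in> set [0, 1, 2, 3]"
    using assms(1) by auto
  then have "jones_band_check n"
    using jones_band_check_upto_3 unfolding list_all_iff by blast
  then show ?thesis
    using jones_band_if_check assms(2,3) by blast
qed

subsection \<open>The blocks of a partition\<close>

definition part_start :: "nat list \<Rightarrow> nat \<Rightarrow> nat" where
  "part_start P m = sum_list (take m P)"

lemma part_start_mono:
  assumes "m \<le> m'"
  shows "part_start P m \<le> part_start P m'"
proof -
  have "take m' P = take m P @ take (m' - m) (drop m P)"
    using assms by (metis le_add_diff_inverse take_add)
  then show ?thesis
    by (simp add: part_start_def)
qed

lemma part_start_Suc: "m < length P \<Longrightarrow> part_start P (Suc m) = part_start P m + P ! m"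
  by (simp add: part_start_def take_Suc_conv_app_nth)

lemma part_start_le_sum_list: "part_start P m \<le> sum_list P"
  by (metis part_start_def part_start_mono take_all_iff nat_le_linear take_all)

lemma cuts_eq_part_starts: "cuts P = part_start P ` {0<..<length P}"
  by (auto simp: cuts_def part_start_def)

lemma block_exists:
  "i < sum_list P \<Longrightarrow> \<exists>m<length P. part_start P m \<le> i \<and> i < part_start P m + P ! m"
proof (induction P arbitrary: i)
  case Nil
  then show ?case by simp
next
  case (Cons x P)
  have start_Suc: "part_start (x # P) (Suc k) = x + part_start P k" for k
    by (simp add: part_start_def)
  show ?case
  proof (cases "i < x")
    case True
    then show ?thesis by (intro exI[of _ 0]) (simp add: part_start_def)
  next
    case False
    then have "i - x < sum_list P"
      using Cons.prems by simp
    then obtain m where m: "m < length P" "part_start P m \<le> i - x" "i - x < part_start P m + P ! m"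
      using Cons.IH by blast
    then have "x + part_start P m \<le> i \<and> i < x + part_start P m + P ! m"
      using False by linarith
    then show ?thesis
      using m(1) by (intro exI[of _ "Suc m"]) (simp add: start_Suc)
  qed
qed

lemma blocks_disjoint:
  assumes "m < length P" "m' < length P" "m \<noteq> m'"
  shows "part_start P m + P ! m \<le> part_start P m' \<or> part_start P m' + P ! m' \<le> part_start P m"
proof (cases "m < m'")
  case True
  then have "part_start P (Suc m) \<le> part_start P m'"
    by (intro part_start_mono) simp
  with assms show ?thesis by (simp add: part_start_Suc)
next
  case False
  then have "part_start P (Suc m') \<le> part_start P m"
    using assms(3) by (intro part_start_mono) simp
  with assms show ?thesis by (simp add: part_start_Suc)
qed

lemma block_end_le:
  "m < length P \<Longrightarrow> part_start P m + P ! m \<le> sum_list P"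
  by (metis part_start_Suc part_start_le_sum_list)

definition closed_block :: "nat \<Rightarrow> nat \<Rightarrow> diagram \<Rightarrow> bool" where
  "closed_block s a d \<longleftrightarrow>
     (\<forall>(p, q)\<in>d. s \<le> snd p \<and> snd p < s + a \<longrightarrow> s \<le> snd q \<and> snd q < s + a)"

lemma has_partition_iff_closed_blocks:
  assumes sub: "d \<subseteq> pts (sum_list P) \<times> pts (sum_list P)"
  shows "has_partition P d \<longleftrightarrow> (\<forall>m<length P. closed_block (part_start P m) (P ! m) d)"
    (is "_ \<longleftrightarrow> (\<forall>m<length P. ?closed m)")
proof
  assume hp: "has_partition P d"
  show "\<forall>m<length P. ?closed m"
  proof (intro allI impI, unfold closed_block_def, clarify)
    fix m p q
    assume m: "m < length P" and pq: "(p, q) \<in> d"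
      and p: "part_start P m \<le> snd p" "snd p < part_start P m + P ! m"
    have "snd q < sum_list P"
      using pq sub by auto
    then obtain m' where m': "m' < length P" "part_start P m' \<le> snd q" "snd q < part_start P m' + P ! m'"
      using block_exists by blast
    have same_side: "snd p < c \<longleftrightarrow> snd q < c" if "c \<in> cuts P" for c
      using that hp pq unfolding has_partition_def by blast
    have "m' = m"
    proof (rule ccontr)
      assume "m' \<noteq> m"
      then consider "m < m'" | "m' < m" by linarith
      then show False
      proof cases
        case 1
        then show False
          using same_side[of "part_start P m'"] part_start_mono[of "Suc m" m' P] part_start_Suc[of m P] m m' p
          by (auto simp: cuts_eq_part_starts)
      next
        case 2
        then show False
          using same_side[of "part_start P m"] part_start_mono[of "Suc m'" m P] part_start_Suc[of m' P] m m' p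
          by (auto simp: cuts_eq_part_starts)
      qed
    qed
    then show "part_start P m \<le> snd q \<and> snd q < part_start P m + P ! m"
      using m' by simp
  qed
next
  assume closed: "\<forall>m<length P. ?closed m"
  show "has_partition P d"
    unfolding has_partition_def
  proof (intro allI impI)
    fix p q c
    assume pq: "(p, q) \<in> d" and "c \<in> cuts P"
    then obtain k where k: "0 < k" "k < length P" "c = part_start P k"
      by (auto simp: cuts_eq_part_starts)
    have "snd p < sum_list P"
      using pq sub by auto
    then obtain m where m: "m < length P" "part_start P m \<le> snd p" "snd p < part_start P m + P ! m"
      using block_exists by blast
    then have q: "part_start P m \<le> snd q" "snd q < part_start P m + P ! m"
      using closed pq by (auto simp: closed_block_def)
    show "snd p < c \<longleftrightarrow> snd q < c"
    proof (cases "k \<le> m")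
      case True
      then show ?thesis using part_start_mono[of k m P] k m q by linarith
    next
      case False
      then show ?thesis using part_start_mono[of "Suc m" k P] part_start_Suc[of m P] k m q by linarith
    qed
  qed
qed

subsection \<open>Restriction to a block\<close>

definition shift :: "nat \<Rightarrow> 'a \<times> nat \<Rightarrow> 'a \<times> nat" where
  "shift s p = (fst p, snd p + s)"

lemma snd_shift [simp]: "snd (shift s p) = snd p + s"
  by (simp add: shift_def)

lemma inj_shift: "inj (shift s)"
  by (rule injI) (simp add: shift_def prod_eq_iff)

lemma shift_cases:
  assumes "s \<le> snd p"
  obtains p0 where "p = shift s p0"
  using assms by (intro that[of "(fst p, snd p - s)"]) (auto simp: shift_def)

lemma shift_cases_block:
  assumes "s \<le> snd p" "snd p < s + a"
  obtains p0 where "p = shift s p0" "snd p0 < a"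
  using assms by (intro that[of "(fst p, snd p - s)"]) (auto simp: shift_def)

lemma emb_shift:
  "embOut (shift s p) = shift s (embOut p)" "embA (shift s p) = shift s (embA p)"
  "embB (shift s p) = shift s (embB p)"
  by (cases p; cases "fst p"; simp add: shift_def)+

lemma bpos_shift:
  assumes "snd p < a" "snd q < a" "s + a \<le> n"
  shows "bpos n (shift s p) < bpos n (shift s q) \<longleftrightarrow> bpos a p < bpos a q"
  using assms by (cases p; cases q; cases "fst p"; cases "fst q") (auto simp: shift_def)

definition restrict_block :: "nat \<Rightarrow> nat \<Rightarrow> diagram \<Rightarrow> diagram" where
  "restrict_block s a d = {(p, q). snd p < a \<and> snd q < a \<and> (shift s p, shift s q) \<in> d}"

lemma restrict_block_subset: "restrict_block s a d \<subseteq> pts a \<times> pts a"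
  by (auto simp: restrict_block_def)

lemma closed_blockD:
  assumes "closed_block s a d" "(shift s p, q') \<in> d" "snd p < a"
  obtains q where "q' = shift s q" "snd q < a"
proof -
  have "s \<le> snd q'" "snd q' < s + a"
    using assms by (auto simp: closed_block_def)
  then show ?thesis
    using that shift_cases_block by blast
qed

lemma restrict_block_jones:
  assumes d: "d \<in> jones n" and "s + a \<le> n" and closed: "closed_block s a d"
  shows "restrict_block s a d \<in> jones a"
proof -
  have "sym d" "irrefl d" and ex1: "\<forall>p\<in>pts n. \<exists>!q. (p, q) \<in> d" and nc: "noncrossing n d"
    using d by (auto simp: jones_def)
  have "\<exists>!q. (p, q) \<in> restrict_block s a d" if p: "snd p < a" for p
  proof -
    have "shift s p \<in> pts n"
      using p \<open>s + a \<le> n\<close> by simp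
    then obtain q' where q': "(shift s p, q') \<in> d" and q'_unique: "\<And>q''. (shift s p, q'') \<in> d \<Longrightarrow> q'' = q'"
      using ex1 by blast
    obtain q where q: "q' = shift s q" "snd q < a"
      using closed q' p by (rule closed_blockD)
    have "q'' = q" if "(p, q'') \<in> restrict_block s a d" for q''
      using q'_unique[of "shift s q''"] q that inj_shift
      by (auto simp: restrict_block_def dest: injD)
    moreover have "(p, q) \<in> restrict_block s a d"
      using q q' p by (simp add: restrict_block_def)
    ultimately show ?thesis
      by blast
  qed
  moreover have "sym (restrict_block s a d)"
    using \<open>sym d\<close> unfolding sym_def restrict_block_def by blast
  moreover have "irrefl (restrict_block s a d)"
    using \<open>irrefl d\<close> unfolding irrefl_def restrict_block_def by blast
  moreover have "noncrossing a (restrict_block s a d)"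
    unfolding noncrossing_def
  proof (intro allI impI notI)
    fix p1 q1 p2 q2
    assume "(p1, q1) \<in> restrict_block s a d" "(p2, q2) \<in> restrict_block s a d"
      and "bpos a p1 < bpos a p2 \<and> bpos a p2 < bpos a q1 \<and> bpos a q1 < bpos a q2"
    then show False
      using nc bpos_shift[OF _ _ \<open>s + a \<le> n\<close>] unfolding noncrossing_def restrict_block_def
      by blast
  qed
  ultimately show ?thesis
    using restrict_block_subset by (auto simp: jones_def)
qed

lemma rtrancl_preimage:
  assumes "inj f"
    and closed: "\<And>u w. P u \<Longrightarrow> (f u, w) \<in> r \<Longrightarrow> \<exists>v. w = f v \<and> P v"
    and "P u"
  shows "(f u, w) \<in> r\<^sup>* \<longleftrightarrow> (\<exists>v. w = f v \<and> P v \<and> (u, v) \<in> {(u, v). P u \<and> P v \<and> (f u, f v) \<in> r}\<^sup>*)"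
    (is "_ \<longleftrightarrow> (\<exists>v. _ \<and> _ \<and> (u, v) \<in> ?r'\<^sup>*)")
proof
  assume "(f u, w) \<in> r\<^sup>*"
  then show "\<exists>v. w = f v \<and> P v \<and> (u, v) \<in> ?r'\<^sup>*"
  proof (induction rule: rtrancl_induct)
    case base
    then show ?case using \<open>P u\<close> by blast
  next
    case (step w w')
    then obtain v where v: "w = f v" "P v" "(u, v) \<in> ?r'\<^sup>*" by blast
    moreover obtain v' where "w' = f v'" "P v'"
      using closed[of v w'] step(2) v by blast
    ultimately show ?case
      using step(2) by (blast intro: rtrancl_into_rtrancl)
  qed
next
  assume "\<exists>v. w = f v \<and> P v \<and> (u, v) \<in> ?r'\<^sup>*"
  then obtain v where "w = f v" "(u, v) \<in> ?r'\<^sup>*" by blast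
  moreover have "(f u, f v) \<in> r\<^sup>*" if "(u, v) \<in> ?r'\<^sup>*" for v
    using that by (induction rule: rtrancl_induct) (auto intro: rtrancl_into_rtrancl)
  ultimately show "(f u, w) \<in> r\<^sup>*" by blast
qed

lemma image_emb_restrict_block:
  fixes emb :: "point \<Rightarrow> nat \<times> nat"
  assumes emb_shift: "\<And>p. emb (shift s p) = shift s (emb p)"
    and snd_emb: "\<And>p. snd (emb p) = snd p" and "inj emb"
  shows "(u, v) \<in> (\<lambda>(p, q). (emb p, emb q)) ` restrict_block s a z \<longleftrightarrow>
    snd u < a \<and> snd v < a \<and> (shift s u, shift s v) \<in> (\<lambda>(p, q). (emb p, emb q)) ` z"
proof
  assume "(u, v) \<in> (\<lambda>(p, q). (emb p, emb q)) ` restrict_block s a z"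
  then show "snd u < a \<and> snd v < a \<and> (shift s u, shift s v) \<in> (\<lambda>(p, q). (emb p, emb q)) ` z"
    by (force simp: restrict_block_def emb_shift snd_emb)
next
  assume "snd u < a \<and> snd v < a \<and> (shift s u, shift s v) \<in> (\<lambda>(p, q). (emb p, emb q)) ` z"
  then obtain p q where uv: "snd u < a" "snd v < a" and pq: "(p, q) \<in> z"
    and eq: "shift s u = emb p" "shift s v = emb q"
    by auto
  have "s \<le> snd p" "s \<le> snd q"
    using arg_cong[OF eq(1), of snd] arg_cong[OF eq(2), of snd] by (simp_all add: snd_emb)
  then obtain p0 q0 where p0: "p = shift s p0" and q0: "q = shift s q0"
    using shift_cases by metis
  have "u = emb p0" "v = emb q0"
    using eq inj_shift unfolding p0 q0 emb_shift by (auto dest: injD)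
  with uv pq show "(u, v) \<in> (\<lambda>(p, q). (emb p, emb q)) ` restrict_block s a z"
    unfolding p0 q0 restrict_block_def by (auto simp: snd_emb)
qed

lemma stack_edges_restrict_block:
  "stack_edges (restrict_block s a x) (restrict_block s a y) =
     {(u, v). snd u < a \<and> snd v < a \<and> (shift s u, shift s v) \<in> stack_edges x y}"
proof -
  have "inj embA" "inj embB"
    by (auto intro!: injI simp: embA_def embB_def split: prod.splits side.splits)
  note A = image_emb_restrict_block[OF emb_shift(2) snd_emb(2) this(1)]
    and B = image_emb_restrict_block[OF emb_shift(3) snd_emb(3) this(2)]
  show ?thesis
  proof (rule set_eqI)
    fix uv :: "(nat \<times> nat) \<times> (nat \<times> nat)"
    obtain u v where uv: "uv = (u, v)" by (cases uv) blast
    show "uv \<in> stack_edges (restrict_block s a x) (restrict_block s a y) \<longleftrightarrow>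
      uv \<in> {(u, v). snd u < a \<and> snd v < a \<and> (shift s u, shift s v) \<in> stack_edges x y}"
      unfolding uv stack_edges_def Un_iff A B by blast
  qed
qed

lemma stack_edges_closed_block:
  assumes "closed_block s a x" "closed_block s a y" "snd u < a" "(shift s u, w) \<in> stack_edges x y"
  shows "\<exists>v. w = shift s v \<and> snd v < a"
proof -
  have bounds: "s \<le> snd q \<and> snd q < s + a"
    if "closed_block s a z" "(p, q) \<in> z" "snd u + s = snd p" for z p q
    using that assms(3) by (auto simp: closed_block_def)
  from assms(4) consider
      (A) p q where "(p, q) \<in> x" "shift s u = embA p" "w = embA q"
    | (B) p q where "(p, q) \<in> y" "shift s u = embB p" "w = embB q"
    by (auto simp: stack_edges_def)
  then have "s \<le> snd w \<and> snd w < s + a"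
  proof cases
    case A
    have "snd u + s = snd p"
      using arg_cong[OF A(2), of snd] by simp
    then show ?thesis using bounds[OF assms(1) A(1)] A(3) by simp
  next
    case B
    have "snd u + s = snd p"
      using arg_cong[OF B(2), of snd] by simp
    then show ?thesis using bounds[OF assms(2) B(1)] B(3) by simp
  qed
  then show ?thesis
    using shift_cases_block by blast
qed

lemma rtrancl_stack_edges_shift:
  assumes "closed_block s a x" "closed_block s a y" "snd u < a"
  shows "(shift s u, w) \<in> (stack_edges x y)\<^sup>* \<longleftrightarrow>
    (\<exists>v. w = shift s v \<and> snd v < a \<and>
      (u, v) \<in> (stack_edges (restrict_block s a x) (restrict_block s a y))\<^sup>*)"
  using rtrancl_preimage[OF inj_shift, where P = "\<lambda>u. snd u < a" and r = "stack_edges x y"]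
    stack_edges_closed_block[OF assms(1,2)] assms(3)
  by (simp add: stack_edges_restrict_block)

lemma jmult_shift_iff:
  assumes cx: "closed_block s a x" and cy: "closed_block s a y" and p: "snd p < a"
  shows "(shift s p, q') \<in> jmult x y \<longleftrightarrow>
    (\<exists>q. q' = shift s q \<and> snd q < a \<and> (p, q) \<in> jmult (restrict_block s a x) (restrict_block s a y))"
proof
  let ?r = "stack_edges (restrict_block s a x) (restrict_block s a y)"
  note walk = rtrancl_stack_edges_shift[OF cx cy, of "embOut p"]
  assume "(shift s p, q') \<in> jmult x y"
  then have ne: "shift s p \<noteq> q'" and "(shift s (embOut p), embOut q') \<in> (stack_edges x y)\<^sup>*"
    by (simp_all add: jmult_def emb_shift)
  then obtain v where v: "embOut q' = shift s v" "snd v < a" "(embOut p, v) \<in> ?r\<^sup>*"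
    using walk p by auto
  have "s \<le> snd q'"
    using arg_cong[OF v(1), of snd] by simp
  then obtain q where q: "q' = shift s q"
    using shift_cases by blast
  then have "embOut q = v"
    using v(1) inj_shift by (auto simp: emb_shift dest: injD)
  moreover have "p \<noteq> q"
    using ne q by blast
  ultimately have "snd q < a" "(p, q) \<in> jmult (restrict_block s a x) (restrict_block s a y)"
    using v(2,3) by (auto simp: jmult_def)
  then show "\<exists>q. q' = shift s q \<and> snd q < a \<and> (p, q) \<in> jmult (restrict_block s a x) (restrict_block s a y)"
    using q by blast
next
  let ?r = "stack_edges (restrict_block s a x) (restrict_block s a y)"
  assume "\<exists>q. q' = shift s q \<and> snd q < a \<and> (p, q) \<in> jmult (restrict_block s a x) (restrict_block s a y)"
  then obtain q where q: "q' = shift s q" "snd q < a"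
    and pq: "(p, q) \<in> jmult (restrict_block s a x) (restrict_block s a y)"
    by blast
  then have "p \<noteq> q" "(embOut p, embOut q) \<in> ?r\<^sup>*"
    by (simp_all add: jmult_def)
  then have "(shift s (embOut p), shift s (embOut q)) \<in> (stack_edges x y)\<^sup>*"
    using rtrancl_stack_edges_shift[OF cx cy, of "embOut p" "shift s (embOut q)"] p q(2)
    by (metis snd_emb(1))
  moreover have "shift s p \<noteq> shift s q"
    using \<open>p \<noteq> q\<close> inj_shift by (auto dest: injD)
  ultimately show "(shift s p, q') \<in> jmult x y"
    using q(1) by (simp add: jmult_def emb_shift)
qed

lemma restrict_block_jmult:
  assumes "closed_block s a x" "closed_block s a y"
  shows "restrict_block s a (jmult x y) = jmult (restrict_block s a x) (restrict_block s a y)"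
proof (intro equalityI subrelI)
  fix p q
  assume "(p, q) \<in> restrict_block s a (jmult x y)"
  then have p: "snd p < a" and "(shift s p, shift s q) \<in> jmult x y"
    by (auto simp: restrict_block_def)
  then obtain q0 where "shift s q = shift s q0" "(p, q0) \<in> jmult (restrict_block s a x) (restrict_block s a y)"
    using jmult_shift_iff[OF assms p] by blast
  then show "(p, q) \<in> jmult (restrict_block s a x) (restrict_block s a y)"
    using inj_shift by (auto dest: injD)
next
  fix p q
  assume pq: "(p, q) \<in> jmult (restrict_block s a x) (restrict_block s a y)"
  then have "snd p < a" "snd q < a"
    using jmult_subset_pts[OF restrict_block_subset[of s a x] restrict_block_subset[of s a y]] by auto
  moreover have "(shift s p, shift s q) \<in> jmult x y"
    using jmult_shift_iff[OF assms \<open>snd p < a\<close>, of "shift s q"] pq \<open>snd q < a\<close> by blast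
  ultimately show "(p, q) \<in> restrict_block s a (jmult x y)"
    by (simp add: restrict_block_def)
qed

lemma closed_block_jmult:
  assumes "closed_block s a x" "closed_block s a y"
  shows "closed_block s a (jmult x y)"
  unfolding closed_block_def
proof clarify
  fix p' q'
  assume p'q': "(p', q') \<in> jmult x y" and "s \<le> snd p'" "snd p' < s + a"
  then obtain p where p: "p' = shift s p" "snd p < a"
    using shift_cases_block by blast
  then obtain q where "q' = shift s q" "snd q < a"
    using jmult_shift_iff[OF assms p(2)] p'q' by blast
  then show "s \<le> snd q' \<and> snd q' < s + a"
    by simp
qed

subsection \<open>Gluing blocks\<close>

text \<open>The boundary positions of the points right of a cut \<open>s\<close> lie in the interval
  \<open>[s, 2n - s)\<close> and those left of it lie outside, so strings on different sides of a cut cannot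
  cross.\<close>

lemma bpos_inner:
  assumes "s \<le> snd p" "snd p < n"
  shows "s \<le> bpos n p \<and> bpos n p < 2 * n - s"
  using assms by (cases p; cases "fst p") auto

lemma bpos_outer:
  assumes "snd p < s" "s \<le> n"
  shows "bpos n p < s \<or> 2 * n - s \<le> bpos n p"
  using assms by (cases p; cases "fst p") auto

lemma perfect_matching_if_blocks:
  assumes "d \<subseteq> pts (sum_list P) \<times> pts (sum_list P)" and "sym d" "irrefl d"
    and blocks: "\<And>m. m < length P \<Longrightarrow> closed_block (part_start P m) (P ! m) d \<and>
      perfect_matching (pts (P ! m)) (restrict_block (part_start P m) (P ! m) d)"
  shows "perfect_matching (pts (sum_list P)) d"
proof -
  have "\<exists>!q. (p, q) \<in> d" if "p \<in> pts (sum_list P)" for p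
  proof -
    have "snd p < sum_list P"
      using that by simp
    then obtain m where m: "m < length P" and p: "part_start P m \<le> snd p" "snd p < part_start P m + P ! m"
      using block_exists by blast
    let ?s = "part_start P m" and ?a = "P ! m"
    obtain p0 where p0: "p = shift ?s p0" "snd p0 < ?a"
      using p by (rule shift_cases_block)
    have closed: "closed_block ?s ?a d"
      and local: "\<forall>p\<in>pts ?a. \<exists>!q. (p, q) \<in> restrict_block ?s ?a d"
      using blocks[OF m] by (auto simp: perfect_matching_def)
    have "\<exists>!q. (p0, q) \<in> restrict_block ?s ?a d"
      using local p0(2) by simp
    then obtain q0 where q0: "(p0, q0) \<in> restrict_block ?s ?a d"
      and unique: "\<And>q. (p0, q) \<in> restrict_block ?s ?a d \<Longrightarrow> q = q0"
      by blast
    have "q = shift ?s q0" if "(p, q) \<in> d" for q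
    proof -
      have pq: "(shift ?s p0, q) \<in> d"
        using that p0(1) by simp
      obtain q1 where "q = shift ?s q1" "snd q1 < ?a"
        using closed pq p0(2) by (rule closed_blockD)
      then show ?thesis
        using unique[of q1] that p0 by (simp add: restrict_block_def)
    qed
    moreover have "(p, shift ?s q0) \<in> d"
      using q0 p0 by (simp add: restrict_block_def)
    ultimately show ?thesis by blast
  qed
  then show ?thesis
    using assms by (simp add: perfect_matching_def)
qed

lemma not_crossing_in_block:
  assumes nc: "noncrossing a (restrict_block s a d)" and "s + a \<le> n"
    and "(p1, q1) \<in> d" "(p2, q2) \<in> d"
    and "\<forall>p\<in>{p1, q1, p2, q2}. s \<le> snd p \<and> snd p < s + a"
  shows "\<not> (bpos n p1 < bpos n p2 \<and> bpos n p2 < bpos n q1 \<and> bpos n q1 < bpos n q2)"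
proof
  assume cross: "bpos n p1 < bpos n p2 \<and> bpos n p2 < bpos n q1 \<and> bpos n q1 < bpos n q2"
  obtain u1 v1 u2 v2 where shifted: "p1 = shift s u1" "q1 = shift s v1" "p2 = shift s u2" "q2 = shift s v2"
    and small: "snd u1 < a" "snd v1 < a" "snd u2 < a" "snd v2 < a"
    using assms(5) shift_cases_block by (metis insert_iff)
  have "(u1, v1) \<in> restrict_block s a d" "(u2, v2) \<in> restrict_block s a d"
    using assms(3,4) shifted small by (auto simp: restrict_block_def)
  moreover have "bpos a u1 < bpos a u2 \<and> bpos a u2 < bpos a v1 \<and> bpos a v1 < bpos a v2"
    using cross unfolding shifted
      bpos_shift[OF small(1) small(3) \<open>s + a \<le> n\<close>]
      bpos_shift[OF small(3) small(2) \<open>s + a \<le> n\<close>]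
      bpos_shift[OF small(2) small(4) \<open>s + a \<le> n\<close>] .
  ultimately show False
    using nc unfolding noncrossing_def by blast
qed

lemma noncrossing_if_blocks:
  assumes sub: "d \<subseteq> pts (sum_list P) \<times> pts (sum_list P)"
    and blocks: "\<And>m. m < length P \<Longrightarrow> closed_block (part_start P m) (P ! m) d \<and>
      noncrossing (P ! m) (restrict_block (part_start P m) (P ! m) d)"
  shows "noncrossing (sum_list P) d"
  unfolding noncrossing_def
proof (intro allI impI notI)
  let ?n = "sum_list P"
  fix p1 q1 p2 q2
  assume d1: "(p1, q1) \<in> d" and d2: "(p2, q2) \<in> d"
    and cross: "bpos ?n p1 < bpos ?n p2 \<and> bpos ?n p2 < bpos ?n q1 \<and> bpos ?n q1 < bpos ?n q2"
  have in_block: "\<exists>m<length P. part_start P m \<le> snd p \<and> snd p < part_start P m + P ! m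
      \<and> part_start P m \<le> snd q \<and> snd q < part_start P m + P ! m" if "(p, q) \<in> d" for p q
  proof -
    have "snd p < sum_list P"
      using that sub by auto
    then obtain m where "m < length P" "part_start P m \<le> snd p" "snd p < part_start P m + P ! m"
      using block_exists by blast
    then show ?thesis
      using blocks that by (fastforce simp: closed_block_def)
  qed
  obtain m1 where m1: "m1 < length P" "part_start P m1 \<le> snd p1" "snd p1 < part_start P m1 + P ! m1"
    "part_start P m1 \<le> snd q1" "snd q1 < part_start P m1 + P ! m1"
    using in_block[OF d1] by blast
  obtain m2 where m2: "m2 < length P" "part_start P m2 \<le> snd p2" "snd p2 < part_start P m2 + P ! m2"
    "part_start P m2 \<le> snd q2" "snd q2 < part_start P m2 + P ! m2"
    using in_block[OF d2] by blast
  show False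
  proof (cases "m1 = m2")
    case True
    then show False
      using not_crossing_in_block[OF _ block_end_le[OF m1(1)] d1 d2] blocks[OF m1(1)] m1 m2 cross
      by simp
  next
    case False
    have "part_start P m1 + P ! m1 \<le> sum_list P" "part_start P m2 + P ! m2 \<le> sum_list P"
      using block_end_le m1(1) m2(1) by blast+
    from blocks_disjoint[OF m1(1) m2(1) False] show False
    proof
      assume "part_start P m1 + P ! m1 \<le> part_start P m2"
      then show False
        using cross bpos_outer[of q1 "part_start P m2" ?n] bpos_inner[of "part_start P m2" p2 ?n]
          bpos_inner[of "part_start P m2" q2 ?n] m1 m2 \<open>part_start P m2 + P ! m2 \<le> ?n\<close>
        by linarith
    next
      assume "part_start P m2 + P ! m2 \<le> part_start P m1"
      then show False
        using cross bpos_outer[of p2 "part_start P m1" ?n] bpos_inner[of "part_start P m1" p1 ?n]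
          bpos_inner[of "part_start P m1" q1 ?n] m1 m2 \<open>part_start P m1 + P ! m1 \<le> ?n\<close>
        by linarith
    qed
  qed
qed

lemma subset_if_restrict_blocks_subset:
  assumes sub: "x \<subseteq> pts (sum_list P) \<times> pts (sum_list P)"
    and blocks: "\<And>m. m < length P \<Longrightarrow> closed_block (part_start P m) (P ! m) x \<and>
      restrict_block (part_start P m) (P ! m) x \<subseteq> restrict_block (part_start P m) (P ! m) y"
  shows "x \<subseteq> y"
proof (rule subrelI)
  fix p q
  assume pq: "(p, q) \<in> x"
  then have "snd p < sum_list P"
    using sub by auto
  then obtain m where m: "m < length P" "part_start P m \<le> snd p" "snd p < part_start P m + P ! m"
    using block_exists by blast
  let ?s = "part_start P m" and ?a = "P ! m"
  obtain p0 where p0: "p = shift ?s p0" "snd p0 < ?a"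
    using m(2,3) by (rule shift_cases_block)
  have "(shift ?s p0, q) \<in> x"
    using pq p0(1) by simp
  then obtain q0 where q0: "q = shift ?s q0" "snd q0 < ?a"
    using blocks[OF m(1)] p0(2) by (auto elim: closed_blockD)
  have "(p0, q0) \<in> restrict_block ?s ?a x"
    using pq p0 q0 by (simp add: restrict_block_def)
  then show "(p, q) \<in> y"
    using blocks[OF m(1)] p0 q0 by (auto simp: restrict_block_def)
qed

lemma sym_jmult:
  assumes "sym x" "sym y"
  shows "sym (jmult x y)"
proof -
  have "sym (stack_edges x y)"
  proof (rule symI)
    fix u v
    assume "(u, v) \<in> stack_edges x y"
    then consider (A) p q where "(p, q) \<in> x" "u = embA p" "v = embA q"
      | (B) p q where "(p, q) \<in> y" "u = embB p" "v = embB q"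
      by (auto simp: stack_edges_def)
    then show "(v, u) \<in> stack_edges x y"
    proof cases
      case A
      then have "(q, p) \<in> x" using assms(1) by (simp add: symD)
      then show ?thesis using A by (force simp: stack_edges_def)
    next
      case B
      then have "(q, p) \<in> y" using assms(2) by (simp add: symD)
      then show ?thesis using B by (force simp: stack_edges_def)
    qed
  qed
  then have "sym ((stack_edges x y)\<^sup>*)"
    by (rule sym_rtrancl)
  then show ?thesis
    unfolding jmult_def sym_def by blast
qed

lemma irrefl_jmult: "irrefl (jmult x y)"
  by (simp add: jmult_def irrefl_def)

lemma jid_jones: "jid n \<in> jones n"
proof -
  have "\<exists>!q. (p, q) \<in> jid n" if "p \<in> pts n" for p
    using that by (cases p; cases "fst p") (auto simp: jid_def)
  then show ?thesis
    by (auto simp: jones_def jid_def sym_def irrefl_def noncrossing_def)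
qed

lemma jid_has_partition: "has_partition P (jid n)"
  by (auto simp: has_partition_def jid_def)

lemma JSMP_band:
  assumes band: "\<forall>a\<in>set P. \<forall>x\<in>jones a. \<forall>y\<in>jones a. jmult x y \<in> jones a \<and> jmult x x = x"
    and x: "x \<in> JSMP (sum_list P) P" and y: "y \<in> JSMP (sum_list P) P"
  shows "jmult x y \<in> JSMP (sum_list P) P \<and> jmult x x = x"
proof -
  let ?n = "sum_list P" and ?s = "part_start P"
  have jones: "z \<in> jones ?n" and sub: "z \<subseteq> pts ?n \<times> pts ?n" and sym: "sym z"
    if "z \<in> JSMP ?n P" for z
    using that by (simp_all add: JSMP_def jones_def)
  have closed: "closed_block (?s m) (P ! m) z" if "z \<in> JSMP ?n P" "m < length P" for z m
    using that has_partition_iff_closed_blocks[OF sub[OF that(1)]] by (simp add: JSMP_def)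
  have local: "restrict_block (?s m) (P ! m) z \<in> jones (P ! m)" if "z \<in> JSMP ?n P" "m < length P" for z m
    using restrict_block_jones[OF jones[OF that(1)] block_end_le[OF that(2)] closed[OF that]] .
  have sub_xy: "jmult x y \<subseteq> pts ?n \<times> pts ?n" "jmult x x \<subseteq> pts ?n \<times> pts ?n"
    using jmult_subset_pts[OF sub[OF x] sub[OF y]] jmult_subset_pts[OF sub[OF x] sub[OF x]] .
  have blocks: "closed_block (?s m) (P ! m) (jmult x y)"
    "restrict_block (?s m) (P ! m) (jmult x y) \<in> jones (P ! m)"
    "closed_block (?s m) (P ! m) (jmult x x)"
    "restrict_block (?s m) (P ! m) (jmult x x) = restrict_block (?s m) (P ! m) x"
    if "m < length P" for m
    using closed_block_jmult restrict_block_jmult closed[OF x that] closed[OF y that]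
      band[rule_format, OF nth_mem[OF that] local[OF x that] local[OF y that]] by simp_all
  have "perfect_matching (pts ?n) (jmult x y)"
    using perfect_matching_if_blocks[OF sub_xy(1) sym_jmult[OF sym[OF x] sym[OF y]] irrefl_jmult] blocks
    by (simp add: jones_iff x y)
  moreover have "noncrossing ?n (jmult x y)"
    using noncrossing_if_blocks[OF sub_xy(1)] blocks by (simp add: jones_iff)
  moreover have "has_partition P (jmult x y)"
    using has_partition_iff_closed_blocks[OF sub_xy(1)] blocks by simp
  moreover have "jmult x x = x"
    using subset_if_restrict_blocks_subset[OF sub_xy(2)] subset_if_restrict_blocks_subset[OF sub[OF x]]
      blocks closed[OF x] by (simp add: subset_antisym)
  ultimately show ?thesis
    by (simp add: JSMP_def jones_iff)
qed

theorem proposition3p2: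
  fixes n :: nat and P :: "nat list"
  assumes "n \<ge> 1"
    and "\<forall>a\<in>set P. 1 \<le> a \<and> a \<le> 3"
    and "sum_list P = n"
  shows "JSMP n P \<subseteq> jones n
     \<and> jid n \<in> JSMP n P
     \<and> (\<forall>x\<in>JSMP n P. \<forall>y\<in>JSMP n P. jmult x y \<in> JSMP n P)
     \<and> (\<forall>x\<in>JSMP n P. jmult x x = x)"
proof -
  have band: "\<forall>a\<in>set P. \<forall>x\<in>jones a. \<forall>y\<in>jones a. jmult x y \<in> jones a \<and> jmult x x = x"
    using jones_band_upto_3 assms(2) by blast
  have "jid n \<in> JSMP n P"
    using jid_jones jid_has_partition by (simp add: JSMP_def)
  moreover have "jmult x y \<in> JSMP n P \<and> jmult x x = x" if "x \<in> JSMP n P" "y \<in> JSMP n P" for x y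
    using JSMP_band[OF band] that unfolding assms(3) by blast
  ultimately show ?thesis
    by (auto simp: JSMP_def)
qed

end
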